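(* Assume $\theta_i<1$ for all $i$ and $\theta_j>0$ for some $j$. If $\theta_{\max}<1/2$, then for every $x(0)\in\Delta_n$ the trajectory $(V(k),x(k))$ of system (B) converges exponentially fast; in particular $x(k)$ converges exponentially to the unique equilibrium social power $x^*$, i.e. the unique $x^*\in\Delta_n$ with $x^*=(I_n-\Theta)(I_n-W(x^* )^T\Theta)^{-1}\mathbf 1_n/n$.
   Context: Let $n\ge 2$, $\mathbf 1_n$ the all-ones vector, $I_n$ the identity matrix, $\Delta_n=\{x\in\mathbb R^n: x\ge 0,\ \mathbf 1_n^Tx=1\}$. Let $C\in\mathbb R^{n\times n}$ be a nonnegative row-stochastic matrix with zero diagonal, $\theta=(\theta_1,\dots,\theta_n)\in[0,1]^n$, $\Theta=\mathrm{diag}(\theta)$, $\theta_{\max}=\max_j\theta_j$, and for $x\in\mathbb R^n$, $W(x)=\mathrm{diag}(x)+(I_n-\mathrm{diag}(x))C$. System (B): $V(k+1)=\Theta W(x(k))V(k)+I_n-\Theta$, $x(k+1)=V(k+1)^T\mathbf 1_n/n$, $k=0,1,2,\dots$, with $V(0)=I_n$ and $x(0)\in\Delta_n$. An equilibrium is a pair $(V^*,x^* )$ with $V^*$ row-stochastic, $x^*\in\Delta_n$, $V^*=\Theta W(x^* )V^*+I_n-\Theta$, $x^*=(V^* )^T\mathbf 1_n/n$; $x^*$ is its equilibrium social power. *)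

theory Defs
  imports "HOL-Analysis.Analysis"
begin

definition diagm :: "real^'n \<Rightarrow> real^'n^'n" where
  "diagm x = (\<chi> i j. if i = j then x $ i else 0)"

definition ones :: "real^'n" where
  "ones = (\<chi> i. 1)"

definition prob_simplex :: "(real^'n) set" where
  "prob_simplex = {x. (\<forall>i. 0 \<le> x $ i) \<and> (\<Sum>i\<in>UNIV. x $ i) = 1}"

definition row_stochastic :: "real^'n^'n \<Rightarrow> bool" where
  "row_stochastic A \<longleftrightarrow> (\<forall>i j. 0 \<le> A $ i $ j) \<and> (\<forall>i. (\<Sum>j\<in>UNIV. A $ i $ j) = 1)"

definition Wmat :: "real^'n^'n \<Rightarrow> real^'n \<Rightarrow> real^'n^'n" where
  "Wmat C x = diagm x + (mat 1 - diagm x) ** C"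

fun trajB :: "real^'n^'n \<Rightarrow> real^'n \<Rightarrow> real^'n \<Rightarrow> nat \<Rightarrow> (real^'n^'n) \<times> (real^'n)" where
  "trajB C \<theta> x0 0 = (mat 1, x0)"
| "trajB C \<theta> x0 (Suc k) =
     (let (V, x) = trajB C \<theta> x0 k;
          V' = diagm \<theta> ** Wmat C x ** V + (mat 1 - diagm \<theta>)
      in (V', (1 / real CARD('n)) *\<^sub>R (transpose V' *v ones)))"

definition eq_social_power :: "real^'n^'n \<Rightarrow> real^'n \<Rightarrow> real^'n \<Rightarrow> bool" where
  "eq_social_power C \<theta> xs \<longleftrightarrow> xs \<in> prob_simplex \<and>
     invertible (mat 1 - transpose (Wmat C xs) ** diagm \<theta>) \<and>
     xs = (mat 1 - diagm \<theta>) ** matrix_inv (mat 1 - transpose (Wmat C xs) ** diagm \<theta>)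
            *v ((1 / real CARD('n)) *\<^sub>R ones)"

end

theory Submission
  imports Defs
begin

text \<open>For \<open>k \<ge> 1\<close> system (B) is the iteration \<open>V(k+1) = F(V(k))\<close> of the influence update
  \<open>F(V) = \<Theta> W(x(V)) V + I - \<Theta>\<close> with \<open>x(V) = V\<^sup>T \<one>/n\<close>. On row-stochastic matrices
  \<open>F\<close> contracts the maximum row sum norm by the factor \<open>2\<theta>\<^sub>m\<^sub>a\<^sub>x < 1\<close>: in
  \<open>F(V) - F(V') = \<Theta>(W(x)(V - V') + diag(x - x')(I - C)V')\<close> the matrix \<open>W(x)\<close> is
  row-stochastic, and since \<open>x - x'\<close> sums to zero each \<open>|x\<^sub>i - x'\<^sub>i|\<close> is at most half of
  \<open>\<parallel>x - x'\<parallel>\<^sub>1 \<le> \<parallel>V - V'\<parallel>\<^sub>\<infinity>\<close>. Banach's theorem yields a unique fixed point \<open>V\<^sup>*\<close>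
  attracting every trajectory geometrically. As \<open>I - \<Theta> W(x)\<close> is invertible, the equilibria
  \<open>x\<^sup>*\<close> are exactly the social powers of fixed points of \<open>F\<close>, so \<open>x\<^sup>* = x(V\<^sup>*)\<close> is unique.\<close>

lemma diagm_mult_nth: "(diagm d ** A) $ i $ j = d $ i * A $ i $ j"
  by (simp add: diagm_def matrix_matrix_mult_def if_distrib if_distribR sum.delta cong: if_cong)

lemma mat_1_minus_diagm: "mat 1 - diagm d = diagm (ones - d)"
  by (simp add: vec_eq_iff diagm_def mat_def ones_def)

lemma transpose_diagm: "transpose (diagm d) = diagm d"
  by (simp add: transpose_def diagm_def vec_eq_iff)

lemma transpose_diff: "transpose (A - B) = transpose A - transpose (B :: 'a::ab_group_add^'n^'m)"
  by (simp add: transpose_def vec_eq_iff)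

lemma matrix_diff_ldistrib: "A ** (B - C) = A ** B - A ** (C :: 'a::ring_1^'p^'n)"
  by (simp add: matrix_matrix_mult_def vec_eq_iff sum_subtractf right_diff_distrib)

lemma matrix_diff_rdistrib: "(A - B) ** C = A ** C - B ** (C :: 'a::ring_1^'p^'n)"
  by (simp add: matrix_matrix_mult_def vec_eq_iff sum_subtractf left_diff_distrib)

lemma matrix_inv_right: "invertible A \<Longrightarrow> A ** matrix_inv A = mat 1"
  and matrix_inv_left: "invertible A \<Longrightarrow> matrix_inv A ** A = mat 1"
  unfolding invertible_def matrix_inv_def by (metis (mono_tags, lifting) someI_ex)+

lemma transpose_matrix_inv:
  fixes A :: "real^'n^'n"
  assumes "invertible A"
  shows "transpose (matrix_inv A) = matrix_inv (transpose A)"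
proof -
  have "transpose A ** transpose (matrix_inv A) = mat 1"
    by (metis assms matrix_inv_left matrix_transpose_mul transpose_mat)
  moreover have "matrix_inv (transpose A) ** transpose A = mat 1"
    using assms matrix_inv_left transpose_invertible by blast
  ultimately show ?thesis
    by (metis matrix_mul_assoc matrix_mul_lid matrix_mul_rid)
qed

lemma affine_fixed_point_iff:
  fixes M T V :: "real^'n^'n"
  assumes "invertible (mat 1 - M)"
  shows "V = M ** V + T \<longleftrightarrow> V = matrix_inv (mat 1 - M) ** T"
proof -
  have "V = M ** V + T \<longleftrightarrow> (mat 1 - M) ** V = T"
    by (auto simp: matrix_diff_rdistrib algebra_simps)
  also have "\<dots> \<longleftrightarrow> V = matrix_inv (mat 1 - M) ** T"
    using matrix_inv_left[OF assms] matrix_inv_right[OF assms]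
    by (metis matrix_mul_assoc matrix_mul_lid)
  finally show ?thesis .
qed

lemma row_stochastic_mat_1: "row_stochastic (mat 1)"
  unfolding row_stochastic_def by (simp add: mat_def)

lemma row_stochastic_mult:
  assumes A: "row_stochastic A" and B: "row_stochastic B"
  shows "row_stochastic (A ** B)"
  unfolding row_stochastic_def
proof (intro conjI allI)
  fix i j
  show "0 \<le> (A ** B) $ i $ j"
    using A B unfolding row_stochastic_def matrix_matrix_mult_def by (auto intro: sum_nonneg)
next
  fix i
  have "(\<Sum>j\<in>UNIV. (A ** B) $ i $ j) = (\<Sum>k\<in>UNIV. A $ i $ k * (\<Sum>j\<in>UNIV. B $ k $ j))"
    unfolding matrix_matrix_mult_def by (simp add: sum_distrib_left) (rule sum.swap)
  then show "(\<Sum>j\<in>UNIV. (A ** B) $ i $ j) = 1"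
    using A B unfolding row_stochastic_def by simp
qed

lemma row_stochastic_diagm_combination:
  assumes A: "row_stochastic A" and B: "row_stochastic B"
    and t: "\<forall>i. 0 \<le> t $ i \<and> t $ i \<le> 1"
  shows "row_stochastic (diagm t ** A + (mat 1 - diagm t) ** B)"
proof -
  have nth: "(diagm t ** A + (mat 1 - diagm t) ** B) $ i $ j
      = t $ i * A $ i $ j + (1 - t $ i) * B $ i $ j" for i j by (simp add: mat_1_minus_diagm diagm_mult_nth ones_def)
  show ?thesis
    using A B t unfolding row_stochastic_def nth
    by (simp add: sum.distrib sum_distrib_left[symmetric])
qed

lemma prob_simplex_nth_le_1:
  assumes "x \<in> prob_simplex"
  shows "x $ i \<le> 1"
proof -
  have "x $ i \<le> (\<Sum>k\<in>UNIV. x $ k)"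
    using assms unfolding prob_simplex_def by (intro member_le_sum) auto
  then show ?thesis
    using assms unfolding prob_simplex_def by simp
qed

lemma row_stochastic_Wmat:
  assumes "row_stochastic C" "x \<in> prob_simplex"
  shows "row_stochastic (Wmat C x)"
proof -
  have "Wmat C x = diagm x ** mat 1 + (mat 1 - diagm x) ** C"
    by (simp add: Wmat_def)
  then show ?thesis
    using row_stochastic_diagm_combination[OF row_stochastic_mat_1 assms(1), of x]
      assms(2) prob_simplex_nth_le_1
    unfolding prob_simplex_def by auto
qed

lemma row_stochastic_step:
  assumes "row_stochastic C" "x \<in> prob_simplex" "row_stochastic V"
    and "\<forall>i. 0 \<le> \<theta> $ i \<and> \<theta> $ i \<le> 1"
  shows "row_stochastic (diagm \<theta> ** Wmat C x ** V + (mat 1 - diagm \<theta>))"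
proof -
  have "row_stochastic (Wmat C x ** V)"
    using assms by (simp add: row_stochastic_mult row_stochastic_Wmat)
  from row_stochastic_diagm_combination[OF this row_stochastic_mat_1 assms(4)]
  show ?thesis
    by (simp add: matrix_mul_assoc)
qed

definition social_power :: "real^'n^'n \<Rightarrow> real^'n" where
  "social_power V = (1 / real CARD('n)) *\<^sub>R (transpose V *v ones)"

lemma social_power_nth:
  fixes V :: "real^'n^'n"
  shows "social_power V $ j = (\<Sum>i\<in>UNIV. V $ i $ j) / real CARD('n)"
  by (simp add: social_power_def transpose_def matrix_vector_mult_def ones_def)

lemma social_power_diff: "social_power V - social_power V' = social_power (V - V')"
  by (simp add: social_power_def transpose_diff matrix_vector_mult_diff_rdistrib
      scaleR_right_diff_distrib)

lemma social_power_in_prob_simplex: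
  fixes V :: "real^'n^'n"
  assumes "row_stochastic V"
  shows "social_power V \<in> prob_simplex"
proof -
  have "(\<Sum>j\<in>UNIV. social_power V $ j) = (\<Sum>i\<in>UNIV. \<Sum>j\<in>UNIV. V $ i $ j) / real CARD('n)"
    unfolding social_power_nth sum_divide_distrib[symmetric] by (rule arg_cong[OF sum.swap])
  also have "\<dots> = 1"
    using assms unfolding row_stochastic_def by simp
  finally show ?thesis
    using assms unfolding prob_simplex_def row_stochastic_def
    by (auto simp: social_power_nth intro!: sum_nonneg divide_nonneg_nonneg)
qed

section \<open>The maximum row sum norm\<close>

definition abs_row_sum :: "real^'n^'m \<Rightarrow> 'm \<Rightarrow> real" where
  "abs_row_sum A i = (\<Sum>j\<in>UNIV. \<bar>A $ i $ j\<bar>)"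

definition row_sum_norm :: "real^'n^'m \<Rightarrow> real" where
  "row_sum_norm A = Max (range (abs_row_sum A))"

lemma abs_row_sum_nonneg: "0 \<le> abs_row_sum A i"
  unfolding abs_row_sum_def by (auto intro: sum_nonneg)

lemma abs_row_sum_le_row_sum_norm: "abs_row_sum A i \<le> row_sum_norm A"
  unfolding row_sum_norm_def by (rule Max_ge) auto

lemma row_sum_norm_le: "(\<And>i. abs_row_sum A i \<le> b) \<Longrightarrow> row_sum_norm A \<le> b"
  unfolding row_sum_norm_def by (subst Max_le_iff) auto

lemma row_sum_norm_nonneg: "0 \<le> row_sum_norm A"
  using abs_row_sum_nonneg abs_row_sum_le_row_sum_norm order_trans by blast

lemma abs_nth_le_abs_row_sum: "\<bar>A $ i $ j\<bar> \<le> abs_row_sum A i"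
  unfolding abs_row_sum_def by (rule member_le_sum) auto

lemma row_sum_norm_eq_0_iff: "row_sum_norm A = 0 \<longleftrightarrow> A = 0"
proof
  assume "row_sum_norm A = 0"
  then have "\<bar>A $ i $ j\<bar> \<le> 0" for i j
    by (metis abs_nth_le_abs_row_sum abs_row_sum_le_row_sum_norm order_trans)
  then show "A = 0"
    by (simp add: vec_eq_iff)
next
  assume "A = 0"
  then show "row_sum_norm A = 0"
    by (intro antisym row_sum_norm_le row_sum_norm_nonneg) (simp add: abs_row_sum_def)
qed

lemma abs_row_sum_add_le: "abs_row_sum (A + B) i \<le> abs_row_sum A i + abs_row_sum B i"
  unfolding abs_row_sum_def by (simp add: sum.distrib[symmetric] sum_mono abs_triangle_ineq)

lemma abs_row_sum_diff_le: "abs_row_sum (A - B) i \<le> abs_row_sum A i + abs_row_sum B i"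
  unfolding abs_row_sum_def by (simp add: sum.distrib[symmetric] sum_mono abs_triangle_ineq4)

lemma abs_row_sum_diagm_mult: "abs_row_sum (diagm d ** A) i = \<bar>d $ i\<bar> * abs_row_sum A i"
  by (simp add: abs_row_sum_def diagm_mult_nth abs_mult sum_distrib_left)

lemma abs_row_sum_mult_le: "abs_row_sum (A ** B) i \<le> abs_row_sum A i * row_sum_norm B"
proof -
  have "abs_row_sum (A ** B) i \<le> (\<Sum>j\<in>UNIV. \<Sum>k\<in>UNIV. \<bar>A $ i $ k\<bar> * \<bar>B $ k $ j\<bar>)"
    unfolding abs_row_sum_def matrix_matrix_mult_def
    by (auto intro!: sum_mono order_trans[OF sum_abs] simp: abs_mult)
  also have "\<dots> = (\<Sum>k\<in>UNIV. \<bar>A $ i $ k\<bar> * abs_row_sum B k)"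
    unfolding abs_row_sum_def by (simp add: sum_distrib_left) (rule sum.swap)
  also have "\<dots> \<le> (\<Sum>k\<in>UNIV. \<bar>A $ i $ k\<bar> * row_sum_norm B)"
    by (intro sum_mono mult_left_mono abs_row_sum_le_row_sum_norm) auto
  finally show ?thesis
    by (simp add: abs_row_sum_def sum_distrib_right)
qed

lemma infnorm_le_cart: "(\<And>i. \<bar>x $ i\<bar> \<le> b) \<Longrightarrow> infnorm (x :: real^'n) \<le> b"
  unfolding infnorm_cart by (rule cSup_least) auto

lemma abs_matrix_vector_mult_le: "\<bar>(A *v v) $ i\<bar> \<le> abs_row_sum A i * infnorm v"
proof -
  have "\<bar>(A *v v) $ i\<bar> \<le> (\<Sum>j\<in>UNIV. \<bar>A $ i $ j\<bar> * infnorm v)"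
    unfolding matrix_vector_mult_def
    by (auto intro!: sum_mono order_trans[OF sum_abs] mult_left_mono component_le_infnorm_cart
        simp: abs_mult)
  then show ?thesis
    by (simp add: abs_row_sum_def sum_distrib_right)
qed

lemma abs_row_sum_row_stochastic: "row_stochastic A \<Longrightarrow> abs_row_sum A i = 1"
  unfolding row_stochastic_def abs_row_sum_def by simp

lemma row_sum_norm_row_stochastic: "row_stochastic A \<Longrightarrow> row_sum_norm A = 1"
  unfolding row_sum_norm_def by (simp add: abs_row_sum_row_stochastic image_def)

lemma norm_le_row_sum_norm: "norm (A :: real^'n^'m) \<le> real CARD('m) * row_sum_norm A"
proof -
  have "norm A \<le> (\<Sum>i\<in>UNIV. norm (A $ i))"
    unfolding norm_vec_def by (rule L2_set_le_sum) auto
  also have "\<dots> \<le> (\<Sum>i\<in>(UNIV::'m set). row_sum_norm A)"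
    by (intro sum_mono order_trans[OF norm_le_l1_cart])
      (simp add: abs_row_sum_le_row_sum_norm[unfolded abs_row_sum_def])
  finally show ?thesis
    by simp
qed

lemma row_sum_norm_le_norm: "row_sum_norm (A :: real^'n^'m) \<le> real CARD('n) * norm A"
proof (rule row_sum_norm_le)
  fix i
  have "abs_row_sum A i \<le> (\<Sum>j\<in>(UNIV::'n set). norm A)"
    unfolding abs_row_sum_def
    by (intro sum_mono order_trans[OF component_le_norm_cart Finite_Cartesian_Product.norm_nth_le])
  then show "abs_row_sum A i \<le> real CARD('n) * norm A"
    by simp
qed

lemma sum_abs_social_power_le:
  fixes D :: "real^'n^'n"
  shows "(\<Sum>j\<in>UNIV. \<bar>social_power D $ j\<bar>) \<le> row_sum_norm D"
proof -
  have "(\<Sum>j\<in>UNIV. \<bar>social_power D $ j\<bar>)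
      \<le> (\<Sum>j\<in>UNIV. (\<Sum>i\<in>UNIV. \<bar>D $ i $ j\<bar>) / real CARD('n))"
    unfolding social_power_nth by (intro sum_mono) (simp add: divide_right_mono sum_abs)
  also have "\<dots> = (\<Sum>i\<in>UNIV. abs_row_sum D i) / real CARD('n)"
    unfolding abs_row_sum_def sum_divide_distrib[symmetric] by (rule arg_cong[OF sum.swap])
  also have "\<dots> \<le> (\<Sum>i\<in>(UNIV::'n set). row_sum_norm D) / real CARD('n)"
    by (intro divide_right_mono sum_mono abs_row_sum_le_row_sum_norm) simp
  finally show ?thesis
    by simp
qed

lemma norm_social_power_le:
  fixes D :: "real^'n^'n"
  shows "norm (social_power D) \<le> row_sum_norm D"
  using norm_le_l1_cart sum_abs_social_power_le order_trans by blast

section \<open>Contraction of the influence update\<close>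

definition influence_update :: "real^'n^'n \<Rightarrow> real^'n \<Rightarrow> real^'n^'n \<Rightarrow> real^'n^'n" where
  "influence_update C \<theta> V = diagm \<theta> ** Wmat C (social_power V) ** V + (mat 1 - diagm \<theta>)"

lemma row_stochastic_influence_update:
  assumes "row_stochastic C" "row_stochastic V" "\<forall>i. 0 \<le> \<theta> $ i \<and> \<theta> $ i \<le> 1"
  shows "row_stochastic (influence_update C \<theta> V)"
  unfolding influence_update_def
  using assms by (simp add: row_stochastic_step social_power_in_prob_simplex)

lemma Wmat_diff: "Wmat C x - Wmat C y = diagm (x - y) ** (mat 1 - C)"
  by (simp add: vec_eq_iff diagm_mult_nth)
    (simp add: Wmat_def diagm_def mat_def matrix_matrix_mult_def if_distrib if_distribR
      algebra_simps cong: if_cong)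

lemma sum_zero_imp_abs_le:
  fixes f :: "'a \<Rightarrow> real"
  assumes "finite A" "i \<in> A" "sum f A = 0"
  shows "2 * \<bar>f i\<bar> \<le> (\<Sum>x\<in>A. \<bar>f x\<bar>)"
proof -
  have "\<bar>f i\<bar> = \<bar>\<Sum>x\<in>A - {i}. f x\<bar>"
    using assms by (simp add: sum.remove)
  also have "\<dots> \<le> (\<Sum>x\<in>A - {i}. \<bar>f x\<bar>)"
    by (rule sum_abs)
  finally show ?thesis
    using assms by (simp add: sum.remove)
qed

lemma abs_social_power_diff_le:
  fixes V V' :: "real^'n^'n"
  assumes "social_power V \<in> prob_simplex" "social_power V' \<in> prob_simplex"
  shows "2 * \<bar>social_power (V - V') $ i\<bar> \<le> row_sum_norm (V - V')"
proof -
  have "(\<Sum>j\<in>UNIV. social_power (V - V') $ j) = 0"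
    using assms unfolding social_power_diff[symmetric] prob_simplex_def
    by (simp add: sum_subtractf)
  then show ?thesis
    using sum_zero_imp_abs_le[where f="\<lambda>j. social_power (V - V') $ j" and A=UNIV and i=i]
      sum_abs_social_power_le[of "V - V'"]
    by simp
qed

lemma abs_row_sum_Wmat_mult_diff_le:
  assumes C: "row_stochastic C" and x: "social_power V \<in> prob_simplex"
    and V': "row_stochastic V'"
  shows "abs_row_sum (Wmat C (social_power V) ** V - Wmat C (social_power V') ** V') i
    \<le> 2 * row_sum_norm (V - V')"
proof -
  define d where "d = social_power (V - V')"
  have split: "Wmat C (social_power V) ** V - Wmat C (social_power V') ** V'
      = Wmat C (social_power V) ** (V - V') + diagm d ** ((mat 1 - C) ** V')"
    unfolding d_def social_power_diff[symmetric] matrix_mul_assoc Wmat_diff[symmetric]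
    by (simp add: matrix_diff_ldistrib matrix_diff_rdistrib)
  have "abs_row_sum (Wmat C (social_power V) ** (V - V')) i \<le> row_sum_norm (V - V')"
    using abs_row_sum_mult_le abs_row_sum_row_stochastic row_stochastic_Wmat[OF C x]
    by (metis mult_1)
  moreover have "abs_row_sum (diagm d ** ((mat 1 - C) ** V')) i \<le> \<bar>d $ i\<bar> * 2"
  proof -
    have "abs_row_sum ((mat 1 - C) ** V') i \<le> 2"
      using abs_row_sum_mult_le[of "mat 1 - C" V' i] abs_row_sum_diff_le[of "mat 1" C i]
      by (simp add: row_sum_norm_row_stochastic[OF V'] abs_row_sum_row_stochastic C
          row_stochastic_mat_1)
    then show ?thesis
      by (simp add: abs_row_sum_diagm_mult mult_left_mono)
  qed
  moreover have "2 * \<bar>d $ i\<bar> \<le> row_sum_norm (V - V')"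
    unfolding d_def
    using abs_social_power_diff_le[OF x social_power_in_prob_simplex[OF V']] .
  ultimately show ?thesis
    unfolding split
    using abs_row_sum_add_le[of "Wmat C (social_power V) ** (V - V')"
        "diagm d ** ((mat 1 - C) ** V')" i]
    by linarith
qed

lemma row_sum_norm_influence_update_diff_le:
  assumes C: "row_stochastic C" and \<theta>: "\<forall>i. 0 \<le> \<theta> $ i \<and> \<theta> $ i \<le> t"
    and x: "social_power V \<in> prob_simplex" and V': "row_stochastic V'"
  shows "row_sum_norm (influence_update C \<theta> V - influence_update C \<theta> V')
    \<le> 2 * t * row_sum_norm (V - V')"
proof (rule row_sum_norm_le)
  fix i
  let ?X = "Wmat C (social_power V) ** V - Wmat C (social_power V') ** V'"
  have "abs_row_sum (influence_update C \<theta> V - influence_update C \<theta> V') i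
      = \<theta> $ i * abs_row_sum ?X i"
    using \<theta> unfolding influence_update_def
    by (simp add: abs_row_sum_diagm_mult matrix_mul_assoc[symmetric]
        flip: matrix_diff_ldistrib)
  also have "\<dots> \<le> t * (2 * row_sum_norm (V - V'))"
    using \<theta> abs_row_sum_Wmat_mult_diff_le[OF C x V', of i] abs_row_sum_nonneg[of ?X i]
    by (intro mult_mono) auto
  finally show "abs_row_sum (influence_update C \<theta> V - influence_update C \<theta> V') i
      \<le> 2 * t * row_sum_norm (V - V')"
    by simp
qed

lemma row_stochastic_funpow_influence_update:
  assumes "row_stochastic C" "row_stochastic V" "\<forall>i. 0 \<le> \<theta> $ i \<and> \<theta> $ i \<le> 1"
  shows "row_stochastic ((influence_update C \<theta> ^^ m) V)"
  by (induction m) (simp_all add: assms row_stochastic_influence_update)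

lemma row_sum_norm_funpow_influence_update_diff_le:
  assumes C: "row_stochastic C" and \<theta>: "\<forall>i. 0 \<le> \<theta> $ i \<and> \<theta> $ i \<le> t" and "t \<le> 1"
    and V: "row_stochastic V" and V': "row_stochastic V'"
  shows "row_sum_norm ((influence_update C \<theta> ^^ m) V - (influence_update C \<theta> ^^ m) V')
    \<le> (2 * t) ^ m * row_sum_norm (V - V')"
proof (induction m)
  case 0
  then show ?case by simp
next
  case (Suc m)
  let ?A = "(influence_update C \<theta> ^^ m) V" and ?B = "(influence_update C \<theta> ^^ m) V'"
  have \<theta>1: "\<forall>i. 0 \<le> \<theta> $ i \<and> \<theta> $ i \<le> 1"
    using \<theta> \<open>t \<le> 1\<close> order_trans by blast
  have "0 \<le> t"
    using \<theta> order_trans by blast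
  have "row_sum_norm (influence_update C \<theta> ?A - influence_update C \<theta> ?B)
      \<le> 2 * t * row_sum_norm (?A - ?B)"
    using row_stochastic_funpow_influence_update[OF C _ \<theta>1] V V'
    by (intro row_sum_norm_influence_update_diff_le[OF C \<theta>] social_power_in_prob_simplex)
  also have "\<dots> \<le> 2 * t * ((2 * t) ^ m * row_sum_norm (V - V'))"
    using Suc.IH \<open>0 \<le> t\<close> by (intro mult_left_mono) auto
  finally show ?case
    by (simp add: mult.assoc)
qed

lemma closed_row_stochastic: "closed {A :: real^'n^'n. row_stochastic A}"
  unfolding row_stochastic_def
  by (intro closed_Collect_conj closed_Collect_all closed_Collect_le closed_Collect_eq
      continuous_intros)

lemma fixed_point_of_contractive_iterate:
  fixes f :: "'a::metric_space \<Rightarrow> 'a"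
  assumes "complete S" "S \<noteq> {}" "f ` S \<subseteq> S" "0 \<le> c" "c < 1"
    and "\<And>x y. x \<in> S \<Longrightarrow> y \<in> S \<Longrightarrow> dist ((f ^^ m) x) ((f ^^ m) y) \<le> c * dist x y"
  shows "\<exists>x\<in>S. f x = x"
proof -
  have "(f ^^ k) ` S \<subseteq> S" for k
    using \<open>f ` S \<subseteq> S\<close> by (induction k) auto
  then have "\<exists>!x\<in>S. (f ^^ m) x = x"
    using assms by (intro Banach_fix)
  then obtain x where x: "x \<in> S" "(f ^^ m) x = x"
    and unique: "\<And>y. y \<in> S \<Longrightarrow> (f ^^ m) y = y \<Longrightarrow> y = x"
    by blast
  have "(f ^^ m) (f x) = f x"
    using x by (metis funpow_swap1)
  then show ?thesis
    using unique x \<open>f ` S \<subseteq> S\<close> by blast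
qed

lemma dist_funpow_influence_update_le:
  fixes C :: "real^'n^'n"
  assumes C: "row_stochastic C" and \<theta>: "\<forall>i. 0 \<le> \<theta> $ i \<and> \<theta> $ i \<le> t" and "t \<le> 1"
    and A: "row_stochastic A" and B: "row_stochastic B"
  shows "dist ((influence_update C \<theta> ^^ m) A) ((influence_update C \<theta> ^^ m) B)
    \<le> real CARD('n) * real CARD('n) * (2 * t) ^ m * dist A B"
proof -
  define n where "n = real CARD('n)"
  have "0 \<le> t"
    using \<theta> by (meson order.trans)
  have "dist ((influence_update C \<theta> ^^ m) A) ((influence_update C \<theta> ^^ m) B)
      \<le> n * ((2 * t) ^ m * row_sum_norm (A - B))"
    unfolding dist_norm n_def
    using row_sum_norm_funpow_influence_update_diff_le[OF C \<theta> \<open>t \<le> 1\<close> A B, of m]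
    by (intro order_trans[OF norm_le_row_sum_norm] mult_left_mono) auto
  also have "\<dots> \<le> n * ((2 * t) ^ m * (n * dist A B))"
    using row_sum_norm_le_norm[of "A - B"] \<open>0 \<le> t\<close>
    unfolding dist_norm n_def by (intro mult_left_mono) auto
  finally show ?thesis
    by (simp add: n_def algebra_simps)
qed

lemma influence_update_has_fixed_point:
  fixes C :: "real^'n^'n"
  assumes C: "row_stochastic C" and \<theta>: "\<forall>i. 0 \<le> \<theta> $ i \<and> \<theta> $ i \<le> t" and "2 * t < 1"
  shows "\<exists>V. row_stochastic V \<and> influence_update C \<theta> V = V"
proof -
  define n where "n = real CARD('n)"
  have "1 \<le> n"
    unfolding n_def by simp
  have "0 \<le> t"
    using \<theta> by (meson order.trans)
  have "t \<le> 1"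
    using \<open>2 * t < 1\<close> by linarith
  then have \<theta>1: "\<forall>i. 0 \<le> \<theta> $ i \<and> \<theta> $ i \<le> 1"
    using \<theta> order_trans by blast
  obtain m where m: "(2 * t) ^ m < 1 / (n * n)"
    using real_arch_pow_inv[of "1 / (n * n)" "2 * t"] \<open>2 * t < 1\<close> \<open>1 \<le> n\<close> by auto
  have "complete {A :: real^'n^'n. row_stochastic A}"
    using closed_row_stochastic complete_eq_closed by blast
  moreover have "influence_update C \<theta> ` {A. row_stochastic A} \<subseteq> {A. row_stochastic A}"
    using row_stochastic_influence_update[OF C _ \<theta>1] by blast
  moreover have "0 \<le> n * n * (2 * t) ^ m" and "n * n * (2 * t) ^ m < 1"
    using m \<open>1 \<le> n\<close> \<open>0 \<le> t\<close> by (simp_all add: field_simps)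
  ultimately have "\<exists>V\<in>{A. row_stochastic A}. influence_update C \<theta> V = V"
    using row_stochastic_mat_1 dist_funpow_influence_update_le[OF C \<theta> \<open>t \<le> 1\<close>]
    unfolding n_def by (intro fixed_point_of_contractive_iterate) auto
  then show ?thesis
    by blast
qed

lemma influence_update_fixed_point_unique:
  assumes C: "row_stochastic C" and \<theta>: "\<forall>i. 0 \<le> \<theta> $ i \<and> \<theta> $ i \<le> t" and "2 * t < 1"
    and V: "influence_update C \<theta> V = V" "social_power V \<in> prob_simplex"
    and V': "influence_update C \<theta> V' = V'" "row_stochastic V'"
  shows "V = V'"
proof -
  have "row_sum_norm (V - V') \<le> 2 * t * row_sum_norm (V - V')"
    using row_sum_norm_influence_update_diff_le[OF C \<theta> V(2) V'(2)] V(1) V'(1) by simp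
  then have "row_sum_norm (V - V') = 0"
    using \<open>2 * t < 1\<close> row_sum_norm_nonneg[of "V - V'"]
    by (smt (verit) mult_le_cancel_right1)
  then show ?thesis
    by (simp add: row_sum_norm_eq_0_iff)
qed

section \<open>Equilibria\<close>

lemma invertible_mat_1_minus_diagm_mult:
  assumes W: "row_stochastic W" and \<theta>: "\<forall>i. 0 \<le> \<theta> $ i \<and> \<theta> $ i \<le> t" and "t < 1"
  shows "invertible (mat 1 - diagm \<theta> ** W)"
proof -
  have "v = 0" if "(mat 1 - diagm \<theta> ** W) *v v = 0" for v
  proof -
    have v: "v = diagm \<theta> *v (W *v v)"
      using that by (simp add: matrix_vector_mult_diff_rdistrib matrix_vector_mul_assoc)
    have "\<bar>v $ i\<bar> \<le> t * infnorm v" for i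
    proof -
      have "\<bar>v $ i\<bar> = \<theta> $ i * \<bar>(W *v v) $ i\<bar>"
        using \<theta> by (subst v) (simp add: matrix_vector_mult_def diagm_def abs_mult if_distrib
            if_distribR cong: if_cong)
      also have "\<dots> \<le> t * infnorm v"
        using \<theta> abs_matrix_vector_mult_le[of W v i] abs_row_sum_row_stochastic[OF W]
        by (intro mult_mono) (auto simp: infnorm_pos_le)
      finally show ?thesis .
    qed
    then have "infnorm v \<le> t * infnorm v"
      by (rule infnorm_le_cart)
    then have "infnorm v = 0"
      using \<open>t < 1\<close> infnorm_pos_le[of v] by (smt (verit) mult_le_cancel_right1)
    then show "v = 0"
      by (simp add: infnorm_eq_0)
  qed
  then show ?thesis
    using matrix_left_invertible_ker invertible_left_inverse by blast
qed

lemma social_power_affine_fixed_point: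
  fixes W :: "real^'n^'n"
  assumes "invertible (mat 1 - diagm \<theta> ** W)"
  shows "social_power (matrix_inv (mat 1 - diagm \<theta> ** W) ** (mat 1 - diagm \<theta>)) =
    (mat 1 - diagm \<theta>) ** matrix_inv (mat 1 - transpose W ** diagm \<theta>)
      *v ((1 / real CARD('n)) *\<^sub>R ones)"
proof -
  have "transpose (mat 1 - diagm \<theta> ** W) = mat 1 - transpose W ** diagm \<theta>"
    by (simp add: transpose_diff matrix_transpose_mul transpose_diagm)
  moreover have "transpose (mat 1 - diagm \<theta>) = mat 1 - diagm \<theta>"
    by (simp add: transpose_diff transpose_diagm)
  ultimately show ?thesis
    unfolding social_power_def matrix_transpose_mul transpose_matrix_inv[OF assms]
    by (simp add: matrix_vector_mult_scaleR)
qed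

lemma eq_social_power_iff_fixed_point:
  fixes C :: "real^'n^'n"
  assumes C: "row_stochastic C" and \<theta>: "\<forall>i. 0 \<le> \<theta> $ i \<and> \<theta> $ i \<le> t" and "t < 1"
  shows "eq_social_power C \<theta> y \<longleftrightarrow>
    y \<in> prob_simplex \<and> (\<exists>V. influence_update C \<theta> V = V \<and> social_power V = y)"
proof (cases "y \<in> prob_simplex")
  case True
  define M where "M = mat 1 - diagm \<theta> ** Wmat C y"
  have M: "invertible M"
    unfolding M_def using row_stochastic_Wmat[OF C True] \<theta> \<open>t < 1\<close>
    by (rule invertible_mat_1_minus_diagm_mult)
  moreover have "transpose M = mat 1 - transpose (Wmat C y) ** diagm \<theta>"
    unfolding M_def by (simp add: transpose_diff matrix_transpose_mul transpose_diagm)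
  ultimately have "invertible (mat 1 - transpose (Wmat C y) ** diagm \<theta>)"
    by (metis transpose_invertible)
  moreover have "influence_update C \<theta> V = V \<longleftrightarrow> V = matrix_inv M ** (mat 1 - diagm \<theta>)"
    if "social_power V = y" for V
  proof -
    have "influence_update C \<theta> V = diagm \<theta> ** Wmat C y ** V + (mat 1 - diagm \<theta>)"
      using that by (simp add: influence_update_def)
    then show ?thesis
      using affine_fixed_point_iff[OF M[unfolded M_def], of V "mat 1 - diagm \<theta>"]
      unfolding M_def by metis
  qed
  then have "(\<exists>V. influence_update C \<theta> V = V \<and> social_power V = y) \<longleftrightarrow>
      social_power (matrix_inv M ** (mat 1 - diagm \<theta>)) = y"
    by blast
  ultimately show ?thesis
    using True social_power_affine_fixed_point[of \<theta> "Wmat C y"] M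
    unfolding eq_social_power_def M_def by auto
next
  case False
  then show ?thesis
    unfolding eq_social_power_def by simp
qed

section \<open>Trajectories of system (B)\<close>

lemma trajB_Suc:
  "fst (trajB C \<theta> x0 (Suc k)) =
    diagm \<theta> ** Wmat C (snd (trajB C \<theta> x0 k)) ** fst (trajB C \<theta> x0 k) + (mat 1 - diagm \<theta>)"
  "snd (trajB C \<theta> x0 (Suc k)) = social_power (fst (trajB C \<theta> x0 (Suc k)))"
  by (cases "trajB C \<theta> x0 k"; simp add: social_power_def Let_def)+

lemma row_stochastic_trajB:
  assumes C: "row_stochastic C" and x0: "x0 \<in> prob_simplex"
    and \<theta>: "\<forall>i. 0 \<le> \<theta> $ i \<and> \<theta> $ i \<le> 1"
  shows "row_stochastic (fst (trajB C \<theta> x0 k)) \<and> snd (trajB C \<theta> x0 k) \<in> prob_simplex"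
proof (induction k)
  case 0
  then show ?case
    using x0 row_stochastic_mat_1 by simp
next
  case (Suc k)
  then have "row_stochastic (fst (trajB C \<theta> x0 (Suc k)))"
    unfolding trajB_Suc using row_stochastic_step[OF C _ _ \<theta>] by blast
  then show ?case
    using social_power_in_prob_simplex trajB_Suc(2) by metis
qed

lemma trajB_eq_funpow_influence_update:
  "fst (trajB C \<theta> x0 (Suc k)) = (influence_update C \<theta> ^^ k) (fst (trajB C \<theta> x0 1))"
proof (induction k)
  case 0
  then show ?case by simp
next
  case (Suc k)
  then show ?case
    using trajB_Suc[of C \<theta> x0 "Suc k"] trajB_Suc(2)[of C \<theta> x0 k]
    by (simp add: influence_update_def)
qed

lemma row_sum_norm_trajB_diff_le:
  assumes C: "row_stochastic C" and \<theta>: "\<forall>i. 0 \<le> \<theta> $ i \<and> \<theta> $ i \<le> t" and "t \<le> 1"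
    and x0: "x0 \<in> prob_simplex" and Vs: "row_stochastic Vs" "influence_update C \<theta> Vs = Vs"
  shows "row_sum_norm (fst (trajB C \<theta> x0 (Suc k)) - Vs)
    \<le> (2 * t) ^ k * row_sum_norm (fst (trajB C \<theta> x0 1) - Vs)"
proof -
  have "(influence_update C \<theta> ^^ k) Vs = Vs"
    by (induction k) (simp_all add: Vs(2))
  moreover have "row_stochastic (fst (trajB C \<theta> x0 1))"
    using row_stochastic_trajB[OF C x0] \<theta> \<open>t \<le> 1\<close> order_trans by blast
  ultimately show ?thesis
    using row_sum_norm_funpow_influence_update_diff_le[OF C \<theta> \<open>t \<le> 1\<close> _ Vs(1), of _ k]
    unfolding trajB_eq_funpow_influence_update by simp
qed

lemma trajB_converges_exponentially:
  fixes C :: "real^'n^'n"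
  assumes C: "row_stochastic C" and \<theta>: "\<forall>i. 0 \<le> \<theta> $ i \<and> \<theta> $ i \<le> t"
    and "0 < t" "2 * t < 1" and x0: "x0 \<in> prob_simplex"
    and Vs: "row_stochastic Vs" "influence_update C \<theta> Vs = Vs"
  shows "\<exists>c\<ge>0. \<forall>k. norm (fst (trajB C \<theta> x0 k) - Vs) \<le> c * (2 * t) ^ k \<and>
    norm (snd (trajB C \<theta> x0 k) - social_power Vs) \<le> c * (2 * t) ^ k"
proof -
  define n where "n = real CARD('n)"
  define K where "K = row_sum_norm (fst (trajB C \<theta> x0 1) - Vs)"
  define c where
    "c = max (norm (mat 1 - Vs)) (max (norm (x0 - social_power Vs)) (n * K / (2 * t)))"
  have "1 \<le> n" "0 \<le> K"
    unfolding n_def K_def by (simp_all add: row_sum_norm_nonneg)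
  have "norm (fst (trajB C \<theta> x0 k) - Vs) \<le> c * (2 * t) ^ k \<and>
      norm (snd (trajB C \<theta> x0 k) - social_power Vs) \<le> c * (2 * t) ^ k" for k
  proof (cases k)
    case 0
    then show ?thesis
      unfolding c_def by simp
  next
    case (Suc j)
    have decay: "row_sum_norm (fst (trajB C \<theta> x0 k) - Vs) \<le> (2 * t) ^ j * K"
      unfolding Suc K_def using \<open>2 * t < 1\<close>
      by (intro row_sum_norm_trajB_diff_le[OF C \<theta> _ x0 Vs]) simp
    have "n * ((2 * t) ^ j * K) = n * K / (2 * t) * (2 * t) ^ k"
      using \<open>0 < t\<close> unfolding Suc by (simp add: field_simps)
    also have "\<dots> \<le> c * (2 * t) ^ k"
      unfolding c_def using \<open>0 < t\<close> by (intro mult_right_mono) auto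
    finally have bound: "n * ((2 * t) ^ j * K) \<le> c * (2 * t) ^ k" .
    have "norm (fst (trajB C \<theta> x0 k) - Vs) \<le> n * ((2 * t) ^ j * K)"
      using norm_le_row_sum_norm[of "fst (trajB C \<theta> x0 k) - Vs"] decay \<open>1 \<le> n\<close>
      unfolding n_def by (smt (verit) mult_left_mono)
    moreover have "norm (snd (trajB C \<theta> x0 k) - social_power Vs) \<le> n * ((2 * t) ^ j * K)"
    proof -
      have "norm (snd (trajB C \<theta> x0 k) - social_power Vs)
          = norm (social_power (fst (trajB C \<theta> x0 k) - Vs))"
        unfolding Suc trajB_Suc(2) social_power_diff ..
      also have "\<dots> \<le> (2 * t) ^ j * K"
        using norm_social_power_le decay by (rule order_trans)
      also have "\<dots> \<le> n * ((2 * t) ^ j * K)"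
        using \<open>1 \<le> n\<close> \<open>0 < t\<close> \<open>0 \<le> K\<close> mult_right_mono[of 1 n "(2 * t) ^ j * K"]
        by simp
      finally show ?thesis .
    qed
    ultimately show ?thesis
      using bound by linarith
  qed
  moreover have "0 \<le> c"
    unfolding c_def by (simp add: le_max_iff_disj)
  ultimately show ?thesis
    by blast
qed

theorem theorem6:
  fixes C :: "real^'n^'n" and \<theta> :: "real^'n"
  assumes n2: "CARD('n) \<ge> 2"
    and C_stoch: "row_stochastic C"
    and C_diag: "\<forall>i. C $ i $ i = 0"
    and th_nonneg: "\<forall>i. 0 \<le> \<theta> $ i"
    and th_lt1: "\<forall>i. \<theta> $ i < 1"
    and th_pos: "\<exists>j. 0 < \<theta> $ j"
    and th_max: "Max (range (\<lambda>j. \<theta> $ j)) < 1/2"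
  shows "(\<exists>!xs. eq_social_power C \<theta> xs) \<and>
         (\<forall>x0 \<in> prob_simplex. \<exists>Vs xs c \<rho>. eq_social_power C \<theta> xs \<and> 0 \<le> c \<and> 0 \<le> \<rho> \<and> \<rho> < 1 \<and>
           (\<forall>k. norm (fst (trajB C \<theta> x0 k) - Vs) \<le> c * \<rho> ^ k \<and>
                norm (snd (trajB C \<theta> x0 k) - xs) \<le> c * \<rho> ^ k))"
proof -
  define t where "t = Max (range (\<lambda>j. \<theta> $ j))"
  have \<theta>: "\<forall>i. 0 \<le> \<theta> $ i \<and> \<theta> $ i \<le> t"
    using th_nonneg unfolding t_def by simp
  have "0 < t" and "2 * t < 1"
    using th_pos th_max \<theta> unfolding t_def by (auto intro: less_le_trans)
  obtain Vs where Vs: "row_stochastic Vs" "influence_update C \<theta> Vs = Vs"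
    using influence_update_has_fixed_point[OF C_stoch \<theta> \<open>2 * t < 1\<close>] by blast
  have eq_iff: "eq_social_power C \<theta> y \<longleftrightarrow>
      y \<in> prob_simplex \<and> (\<exists>V. influence_update C \<theta> V = V \<and> social_power V = y)" for y
    using eq_social_power_iff_fixed_point[OF C_stoch \<theta>] \<open>2 * t < 1\<close> by simp
  have "eq_social_power C \<theta> (social_power Vs)"
    using eq_iff Vs social_power_in_prob_simplex by blast
  moreover have "y = social_power Vs" if "eq_social_power C \<theta> y" for y
    using that eq_iff influence_update_fixed_point_unique[OF C_stoch \<theta> \<open>2 * t < 1\<close> _ _ Vs(2,1)]
    by metis
  moreover have "\<exists>c\<ge>0. \<forall>k. norm (fst (trajB C \<theta> x0 k) - Vs) \<le> c * (2 * t) ^ k \<and>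
      norm (snd (trajB C \<theta> x0 k) - social_power Vs) \<le> c * (2 * t) ^ k"
    if "x0 \<in> prob_simplex" for x0
    using trajB_converges_exponentially[OF C_stoch \<theta> \<open>0 < t\<close> \<open>2 * t < 1\<close> that Vs] .
  ultimately show ?thesis
    using \<open>0 < t\<close> \<open>2 * t < 1\<close> by (metis less_eq_real_def zero_le_mult_iff zero_le_numeral)
qed

end
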